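(* Let $G$ be a finite bipartite graph and let $e_1=\{b_1,w_1\},\dots,e_n=\{b_n,w_n\}$ be pairwise vertex-disjoint edges, with $b_i$ black and $w_i$ white. Let $G^e=G-\{e_1,\dots,e_n\}$ (edges deleted) and $G'=G-\{b_1,w_1,\dots,b_n,w_n\}$ (vertices deleted). Suppose that for every $i$ there is a nonempty channel $B_i\in\mathcal{C}_B(G^e)$ with $B_i\cap\{b_1,\dots,b_n\}\subseteq\{b_i\}$. Then $m_G\equiv m_{G'}\pmod 2$. If moreover $B_i\cap\{b_1,\dots,b_n\}=\{b_i\}$ for all $i$, then $|\mathcal{C}_B(G)|=|\mathcal{C}_B(G')|$.
   Context: $m_H$ is the number of perfect matchings of $H$. A channel of a graph $H$ is a vertex set $C$ such that every vertex of $H$ is adjacent to an even number of vertices of $C$ (empty set included). For bipartite $H$ with black/white coloring, $\mathcal{C}_B(H)$ is the set of channels consisting only of black vertices. *)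

theory Defs
  imports Main
begin

definition simple_graph :: "'a set \<Rightarrow> 'a set set \<Rightarrow> bool" where
  "simple_graph V E \<longleftrightarrow> finite V \<and> (\<forall>e\<in>E. \<exists>x y. x \<in> V \<and> y \<in> V \<and> x \<noteq> y \<and> e = {x, y})"

definition bipartite_graph :: "'a set \<Rightarrow> 'a set set \<Rightarrow> 'a set \<Rightarrow> 'a set \<Rightarrow> bool" where
  "bipartite_graph V E Bl Wh \<longleftrightarrow> simple_graph V E \<and> Bl \<inter> Wh = {} \<and> Bl \<union> Wh = V \<and>
     (\<forall>e\<in>E. \<exists>x\<in>Bl. \<exists>y\<in>Wh. e = {x, y})"

definition perfect_matchings :: "'a set \<Rightarrow> 'a set set \<Rightarrow> 'a set set set" where
  "perfect_matchings V E = {M. M \<subseteq> E \<and> (\<forall>v\<in>V. \<exists>!e. e \<in> M \<and> v \<in> e)}"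

definition num_pm :: "'a set \<Rightarrow> 'a set set \<Rightarrow> nat" where
  "num_pm V E = card (perfect_matchings V E)"

definition channel :: "'a set \<Rightarrow> 'a set set \<Rightarrow> 'a set \<Rightarrow> bool" where
  "channel V E C \<longleftrightarrow> C \<subseteq> V \<and> (\<forall>v\<in>V. even (card {u \<in> C. {u, v} \<in> E}))"

definition black_channels :: "'a set \<Rightarrow> 'a set set \<Rightarrow> 'a set \<Rightarrow> 'a set set" where
  "black_channels V E Bl = {C. C \<subseteq> Bl \<and> channel V E C}"

definition del_vertices_edges :: "'a set set \<Rightarrow> 'a set \<Rightarrow> 'a set set" where
  "del_vertices_edges E S = {e \<in> E. e \<inter> S = {}}"

end

theory Submission
  imports Defs "HOL-Library.FuncSet" "HOL-Combinatorics.Transposition"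
begin

text \<open>
  Encode a perfect matching of the bipartite graph by the bijection sending each black vertex to
  its white partner, and a black channel by its parity condition at the white vertices.  The
  matchings of \<open>G\<close> either use the edge \<open>{b, w}\<close>, and then are matchings of \<open>G - b - w\<close>, or
  are matchings of \<open>G\<close> with that edge deleted.  The latter graph carries a nonempty channel
  \<open>B\<close>, and then its number of matchings is even.  Fix \<open>b\<^sub>0 \<in> B\<close> and, for \<open>u \<in> B\<close>, count the
  matchings after giving \<open>b\<^sub>0\<close> the neighbourhood of \<open>u\<close>.  For \<open>u \<noteq> b\<^sub>0\<close> this creates twin
  vertices, whose matchings cancel in pairs under swapping; expanding along \<open>b\<^sub>0\<close>, the sum of
  all these counts weights each term by a degree into \<open>B\<close>, which is even; so the count for
  \<open>u = b\<^sub>0\<close> is even as well.  If moreover \<open>b \<in> B\<close>, then \<open>B\<close> has odd degree exactly at \<open>w\<close>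
  in \<open>G\<close>, and adding \<open>B\<close> (mod 2) to every channel containing \<open>b\<close> matches the channels of
  \<open>G\<close> with those of \<open>G - b - w\<close>.  The pairs are removed one at a time; the condition
  \<open>B\<^sub>i \<inter> {b\<^sub>1, \<dots>, b\<^sub>n} \<subseteq> {b\<^sub>i}\<close> keeps \<open>B\<^sub>i\<close> inside the shrinking graph.
\<close>

lemma even_card_involution:
  assumes "finite S" "\<And>x. x \<in> S \<Longrightarrow> g x \<in> S" "\<And>x. x \<in> S \<Longrightarrow> g (g x) = x"
    "\<And>x. x \<in> S \<Longrightarrow> g x \<noteq> x"
  shows "even (card S)"
  using assms
proof (induction "card S" arbitrary: S rule: less_induct)
  case less
  show ?case
  proof (cases "S = {}")
    case False
    then obtain x where x: "x \<in> S" by auto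
    have "g x \<in> S" "g x \<noteq> x" using less.prems(2,4)[OF x] by auto
    moreover from this have "card {x, g x} \<le> card S" using less.prems(1) x by (intro card_mono) auto
    ultimately have card_S: "card S = card (S - {x, g x}) + 2"
      using less.prems(1) x by (simp add: card_Diff_subset)
    have "even (card (S - {x, g x}))"
    proof (rule less.hyps)
      fix y assume "y \<in> S - {x, g x}"
      then have y: "y \<in> S" "y \<noteq> x" "y \<noteq> g x" by auto
      have "g y \<noteq> x" "g y \<noteq> g x"
        using less.prems(3)[OF y(1)] less.prems(3)[OF x] y(2,3) by metis+
      then show "g y \<in> S - {x, g x}" using less.prems(2)[OF y(1)] by auto
      show "g (g y) = y" "g y \<noteq> y" using less.prems(3,4)[OF y(1)] by simp_all
    qed (use card_S less.prems(1) in simp_all)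
    then show ?thesis using card_S by simp
  qed simp
qed

lemma even_card_filter_sym_diff:
  assumes "finite X" "finite Y"
  shows "even (card {u \<in> sym_diff X Y. P u}) \<longleftrightarrow>
         (even (card {u \<in> X. P u}) \<longleftrightarrow> even (card {u \<in> Y. P u}))"
proof -
  let ?X = "{u \<in> X. P u}" and ?Y = "{u \<in> Y. P u}"
  have fin: "finite ?X" "finite ?Y" using assms by auto
  have filter: "{u \<in> sym_diff X Y. P u} = (?X - ?Y) \<union> (?Y - ?X)" by auto
  have "card {u \<in> sym_diff X Y. P u} = card (?X - ?Y) + card (?Y - ?X)"
    unfolding filter using fin by (intro card_Un_disjoint) auto
  moreover have "card ?X = card (?X \<inter> ?Y) + card (?X - ?Y)"
    by (rule card_Int_Diff[OF fin(1)])
  moreover have "card ?Y = card (?X \<inter> ?Y) + card (?Y - ?X)"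
    using card_Int_Diff[OF fin(2), of ?X] by (simp add: Int_commute)
  ultimately have "card ?X + card ?Y = card {u \<in> sym_diff X Y. P u} + 2 * card (?X \<inter> ?Y)"
    by linarith
  then have "even (card ?X + card ?Y) \<longleftrightarrow> even (card {u \<in> sym_diff X Y. P u})"
    by simp
  then show ?thesis by simp
qed

subsection \<open>Matchings as bijections along neighbourhoods\<close>

text \<open>\<open>N v\<close> is the set of admissible partners of \<open>v\<close>; requiring \<open>f \<in> Bs \<rightarrow>\<^sub>E Ws\<close> fixes the
  values outside \<open>Bs\<close>, so that matchings and maps correspond one to one.\<close>

definition matching_maps :: "'a set \<Rightarrow> 'a set \<Rightarrow> ('a \<Rightarrow> 'a set) \<Rightarrow> ('a \<Rightarrow> 'a) set" where
  "matching_maps Bs Ws N = {f \<in> Bs \<rightarrow>\<^sub>E Ws. bij_betw f Bs Ws \<and> (\<forall>v\<in>Bs. f v \<in> N v)}"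

lemma finite_matching_maps: "finite Bs \<Longrightarrow> finite Ws \<Longrightarrow> finite (matching_maps Bs Ws N)"
  unfolding matching_maps_def by (rule finite_subset[of _ "Bs \<rightarrow>\<^sub>E Ws"]) (auto intro: finite_PiE)

lemma matching_maps_cong:
  assumes "\<And>v. v \<in> Bs \<Longrightarrow> N v \<inter> Ws = N' v \<inter> Ws"
  shows "matching_maps Bs Ws N = matching_maps Bs Ws N'"
  unfolding matching_maps_def using assms by (auto simp: PiE_iff)

lemma card_matching_maps_fiber:
  assumes b0: "b0 \<in> Bs" and x: "x \<in> Ws" "x \<in> N b0"
  shows "card {f \<in> matching_maps Bs Ws N. f b0 = x} = card (matching_maps (Bs - {b0}) (Ws - {x}) N)"
proof (rule bij_betw_same_card[symmetric],
       rule bij_betw_byWitness[where f' = "\<lambda>f. f(b0 := undefined)"])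
  show "\<forall>g\<in>matching_maps (Bs - {b0}) (Ws - {x}) N. g(b0 := x, b0 := undefined) = g"
    unfolding matching_maps_def by (auto simp: PiE_iff extensional_def fun_eq_iff)
  show "\<forall>f\<in>{f \<in> matching_maps Bs Ws N. f b0 = x}. f(b0 := undefined, b0 := x) = f"
    by auto
  show "(\<lambda>g. g(b0 := x)) ` matching_maps (Bs - {b0}) (Ws - {x}) N \<subseteq> {f \<in> matching_maps Bs Ws N. f b0 = x}"
  proof (rule image_subsetI)
    fix g assume "g \<in> matching_maps (Bs - {b0}) (Ws - {x}) N"
    then have g: "g \<in> (Bs - {b0}) \<rightarrow>\<^sub>E (Ws - {x})" "bij_betw g (Bs - {b0}) (Ws - {x})"
      "\<forall>v\<in>Bs - {b0}. g v \<in> N v" unfolding matching_maps_def by auto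
    have "bij_betw (g(b0 := x)) (Bs - {b0}) (Ws - {x})"
      using g(2) by (subst bij_betw_cong[where g = g]) auto
    then have "bij_betw (g(b0 := x)) (Bs - {b0} \<union> {b0}) (Ws - {x} \<union> {x})"
      using notIn_Un_bij_betw[of b0 "Bs - {b0}" "g(b0 := x)" "Ws - {x}"] by simp
    moreover have "Bs - {b0} \<union> {b0} = Bs" "Ws - {x} \<union> {x} = Ws" using b0 x by auto
    ultimately show "g(b0 := x) \<in> {f \<in> matching_maps Bs Ws N. f b0 = x}"
      using g(1,3) b0 x unfolding matching_maps_def by (auto simp: PiE_iff extensional_def)
  qed
  show "(\<lambda>f. f(b0 := undefined)) ` {f \<in> matching_maps Bs Ws N. f b0 = x} \<subseteq> matching_maps (Bs - {b0}) (Ws - {x}) N"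
  proof (rule image_subsetI)
    fix f assume "f \<in> {f \<in> matching_maps Bs Ws N. f b0 = x}"
    then have f: "f \<in> Bs \<rightarrow>\<^sub>E Ws" "bij_betw f (Bs - {b0}) (Ws - {x})" "\<forall>v\<in>Bs. f v \<in> N v"
      using b0 unfolding matching_maps_def by (auto intro: bij_betw_DiffI)
    then have "bij_betw (f(b0 := undefined)) (Bs - {b0}) (Ws - {x})"
      by (subst bij_betw_cong[where g = f]) auto
    then show "f(b0 := undefined) \<in> matching_maps (Bs - {b0}) (Ws - {x}) N"
      using f unfolding matching_maps_def by (auto simp: PiE_iff extensional_def bij_betw_def)
  qed
qed

lemma card_matching_maps_expand:
  assumes "b0 \<in> Bs" "finite Bs" "finite Ws"
  shows "card (matching_maps Bs Ws N) = (\<Sum>x\<in>Ws \<inter> N b0. card (matching_maps (Bs - {b0}) (Ws - {x}) N))"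
proof -
  have "f b0 \<in> Ws \<inter> N b0" if "f \<in> matching_maps Bs Ws N" for f
    using that assms(1) unfolding matching_maps_def by (auto dest: PiE_mem)
  then have decomp: "matching_maps Bs Ws N = (\<Union>x\<in>Ws \<inter> N b0. {f \<in> matching_maps Bs Ws N. f b0 = x})"
    by blast
  have "card (matching_maps Bs Ws N) = (\<Sum>x\<in>Ws \<inter> N b0. card {f \<in> matching_maps Bs Ws N. f b0 = x})"
    by (subst decomp, rule card_UN_disjoint) (auto simp: assms finite_matching_maps)
  also have "\<dots> = (\<Sum>x\<in>Ws \<inter> N b0. card (matching_maps (Bs - {b0}) (Ws - {x}) N))"
    using assms(1) by (intro sum.cong refl card_matching_maps_fiber) auto
  finally show ?thesis .
qed

lemma card_matching_maps_delete_contract: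
  assumes "b \<in> Bs" "w \<in> Ws" "w \<in> N b" "finite Bs" "finite Ws"
  shows "card (matching_maps Bs Ws N)
           = card (matching_maps (Bs - {b}) (Ws - {w}) N) + card (matching_maps Bs Ws (N(b := N b - {w})))"
proof -
  let ?c = "\<lambda>x. card (matching_maps (Bs - {b}) (Ws - {x}) N)"
  have "matching_maps (Bs - {b}) (Ws - {x}) (N(b := N b - {w})) = matching_maps (Bs - {b}) (Ws - {x}) N"
    for x by (rule matching_maps_cong) auto
  then have contract: "card (matching_maps Bs Ws (N(b := N b - {w}))) = (\<Sum>x\<in>Ws \<inter> N b - {w}. ?c x)"
    using card_matching_maps_expand[of b Bs Ws "N(b := N b - {w})"] assms by (simp add: Int_Diff)
  have "card (matching_maps Bs Ws N) = (\<Sum>x\<in>Ws \<inter> N b. ?c x)"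
    using assms by (intro card_matching_maps_expand)
  also have "\<dots> = ?c w + (\<Sum>x\<in>Ws \<inter> N b - {w}. ?c x)"
    using assms by (intro sum.remove) auto
  finally show ?thesis unfolding contract .
qed

lemma even_card_matching_maps_twins:
  assumes "u \<in> Bs" "v \<in> Bs" "u \<noteq> v" "N u \<inter> Ws = N v \<inter> Ws" "finite Bs" "finite Ws"
  shows "even (card (matching_maps Bs Ws N))"
proof (rule even_card_involution[where g = "\<lambda>f. f \<circ> transpose u v"])
  show "finite (matching_maps Bs Ws N)" using assms by (simp add: finite_matching_maps)
  fix f assume "f \<in> matching_maps Bs Ws N"
  then have f: "f \<in> Bs \<rightarrow>\<^sub>E Ws" "bij_betw f Bs Ws" "\<forall>a\<in>Bs. f a \<in> N a"
    unfolding matching_maps_def by auto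
  show "f \<circ> transpose u v \<circ> transpose u v = f" by (simp add: comp_assoc)
  have "f u \<noteq> f v" using f(2) assms(1-3) by (auto simp: bij_betw_def dest: inj_onD)
  then show "f \<circ> transpose u v \<noteq> f" by (metis comp_apply transpose_apply_first)
  have "f v \<in> N u" "f u \<in> N v" using f(1,3) assms(1,2,4) by (auto dest: PiE_mem)
  then have "\<forall>a\<in>Bs. (f \<circ> transpose u v) a \<in> N a"
    using f(3) by (simp add: transpose_def)
  moreover have "f \<circ> transpose u v \<in> Bs \<rightarrow>\<^sub>E Ws"
    using f(1) assms(1,2) by (auto simp: PiE_iff extensional_def transpose_def)
  ultimately show "f \<circ> transpose u v \<in> matching_maps Bs Ws N"
    using f(2) assms(1,2) unfolding matching_maps_def by (simp add: bij_betw_swap_iff)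
qed

subsection \<open>Channels of a neighbourhood system\<close>

text \<open>Parities are only imposed at \<open>Ws\<close>: a set of black vertices of a bipartite graph has no
  neighbours among the black vertices.\<close>

definition nbh_channel :: "('a \<Rightarrow> 'a set) \<Rightarrow> 'a set \<Rightarrow> 'a set \<Rightarrow> bool" where
  "nbh_channel N Ws C \<longleftrightarrow> (\<forall>x\<in>Ws. even (card {u \<in> C. x \<in> N u}))"

lemma nbh_channel_cong:
  assumes "\<And>u. u \<in> C \<Longrightarrow> N u \<inter> Ws = N' u \<inter> Ws"
  shows "nbh_channel N Ws C = nbh_channel N' Ws C"
proof -
  have "{u \<in> C. x \<in> N u} = {u \<in> C. x \<in> N' u}" if "x \<in> Ws" for x
    using assms that by blast
  then show ?thesis unfolding nbh_channel_def by auto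
qed

lemma nbh_channel_mono: "Ws' \<subseteq> Ws \<Longrightarrow> nbh_channel N Ws C \<Longrightarrow> nbh_channel N Ws' C"
  unfolding nbh_channel_def by blast

lemma sum_neighbourhoods_swap:
  assumes "finite B" "finite Ws"
  shows "(\<Sum>u\<in>B. \<Sum>x\<in>Ws \<inter> N u. c x) = (\<Sum>x\<in>Ws. card {u \<in> B. x \<in> N u} * c x)"
proof -
  have "(\<Sum>u\<in>B. \<Sum>x\<in>Ws \<inter> N u. c x) = (\<Sum>u\<in>B. \<Sum>x\<in>Ws. if x \<in> N u then c x else 0)"
    using assms(2) by (simp add: sum.inter_restrict)
  also have "\<dots> = (\<Sum>x\<in>Ws. \<Sum>u\<in>B. if x \<in> N u then c x else 0)"
    by (rule sum.swap)
  also have "\<dots> = (\<Sum>x\<in>Ws. card {u \<in> B. x \<in> N u} * c x)"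
    using assms(1) by (simp add: sum.If_cases Int_def)
  finally show ?thesis .
qed

lemma even_card_matching_maps_if_nbh_channel:
  assumes "finite Bs" "finite Ws" "B \<subseteq> Bs" "B \<noteq> {}" "nbh_channel N Ws B"
  shows "even (card (matching_maps Bs Ws N))"
proof -
  obtain b0 where b0: "b0 \<in> B" using assms(4) by auto
  have finite_B: "finite B" using assms(1,3) finite_subset by blast
  define c where "c x = card (matching_maps (Bs - {b0}) (Ws - {x}) N)" for x
  have redirect: "card (matching_maps Bs Ws (N(b0 := N u))) = (\<Sum>x\<in>Ws \<inter> N u. c x)" for u
  proof -
    have "matching_maps (Bs - {b0}) (Ws - {x}) (N(b0 := N u)) = matching_maps (Bs - {b0}) (Ws - {x}) N"
      for x by (rule matching_maps_cong) auto
    then show ?thesis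
      unfolding c_def using card_matching_maps_expand[of b0 Bs Ws "N(b0 := N u)"] assms b0 by auto
  qed
  have twins: "even (\<Sum>x\<in>Ws \<inter> N u. c x)" if "u \<in> B - {b0}" for u
    unfolding redirect[symmetric] using that b0 assms(1-3)
    by (intro even_card_matching_maps_twins[of u Bs b0]) auto
  then have "even (\<Sum>u\<in>B - {b0}. \<Sum>x\<in>Ws \<inter> N u. c x)"
    by (rule dvd_sum)
  moreover have "even (\<Sum>u\<in>B. \<Sum>x\<in>Ws \<inter> N u. c x)"
    using assms(5) unfolding sum_neighbourhoods_swap[OF finite_B assms(2)] nbh_channel_def
    by (intro dvd_sum) auto
  ultimately have "even (\<Sum>x\<in>Ws \<inter> N b0. c x)"
    unfolding sum.remove[OF finite_B b0] by simp
  moreover have "card (matching_maps Bs Ws N) = (\<Sum>x\<in>Ws \<inter> N b0. c x)"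
    unfolding c_def using b0 assms(1-3) by (intro card_matching_maps_expand) auto
  ultimately show ?thesis by simp
qed

lemma card_matching_maps_remove_edge_mod2:
  assumes "finite Bs" "finite Ws" "b \<in> Bs" "w \<in> Ws" "w \<in> N b"
    and "B \<subseteq> Bs" "B \<noteq> {}" "nbh_channel (N(b := N b - {w})) Ws B"
  shows "card (matching_maps Bs Ws N) mod 2 = card (matching_maps (Bs - {b}) (Ws - {w}) N) mod 2"
proof -
  have "even (card (matching_maps Bs Ws (N(b := N b - {w}))))"
    using assms by (intro even_card_matching_maps_if_nbh_channel[of Bs Ws B])
  then obtain k where "card (matching_maps Bs Ws (N(b := N b - {w}))) = 2 * k" ..
  then show ?thesis
    using card_matching_maps_delete_contract[of b Bs w Ws N] assms(1-5) by simp
qed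

definition nbh_channels :: "('a \<Rightarrow> 'a set) \<Rightarrow> 'a set \<Rightarrow> 'a set \<Rightarrow> 'a set set" where
  "nbh_channels N Bs Ws = {C. C \<subseteq> Bs \<and> nbh_channel N Ws C}"

lemma nbh_channels_cong:
  assumes "\<And>u. u \<in> Bs \<Longrightarrow> N u \<inter> Ws = N' u \<inter> Ws"
  shows "nbh_channels N Bs Ws = nbh_channels N' Bs Ws"
  unfolding nbh_channels_def using nbh_channel_cong[of _ N Ws N'] assms by blast

lemma card_nbh_channels_remove_edge:
  assumes "finite Bs" "b \<in> Bs" "w \<in> Ws" "w \<in> N b"
    and "B \<subseteq> Bs" "b \<in> B" "nbh_channel (N(b := N b - {w})) Ws B"
  shows "card (nbh_channels N Bs Ws) = card (nbh_channels N (Bs - {b}) (Ws - {w}))"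
proof -
  let ?even = "\<lambda>C x. even (card {u \<in> C. x \<in> N u})"
  have finite_B: "finite B" using assms(1,5) finite_subset by blast
  have B_parity: "?even B x \<longleftrightarrow> x \<noteq> w" if "x \<in> Ws" for x
  proof (cases "x = w")
    case True
    have "{u \<in> B. w \<in> N u} = insert b {u \<in> B. w \<in> (N(b := N b - {w})) u}"
      using assms(4,6) by auto
    then show ?thesis using True that assms(7) finite_B unfolding nbh_channel_def by auto
  next
    case False
    then have "{u \<in> B. x \<in> N u} = {u \<in> B. x \<in> (N(b := N b - {w})) u}" by auto
    then show ?thesis using False that assms(7) unfolding nbh_channel_def by auto
  qed
  have flip: "?even (sym_diff C B) x \<longleftrightarrow> (?even C x \<longleftrightarrow> x \<noteq> w)" if "C \<subseteq> Bs" "x \<in> Ws" for C x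
  proof -
    have "finite C" using that(1) assms(1) finite_subset by blast
    then show ?thesis
      using even_card_filter_sym_diff[OF _ finite_B, of C "\<lambda>u. x \<in> N u"] B_parity[OF that(2)] by simp
  qed
  define \<phi> where "\<phi> C = (if b \<in> C then sym_diff C B else C)" for C
  define \<psi> where "\<psi> D = (if ?even D w then D else sym_diff D B)" for D
  have "bij_betw \<phi> (nbh_channels N Bs Ws) (nbh_channels N (Bs - {b}) (Ws - {w}))"
  proof (rule bij_betw_byWitness[where f' = \<psi>])
    show "\<forall>C\<in>nbh_channels N Bs Ws. \<psi> (\<phi> C) = C"
      using flip assms(3) unfolding nbh_channels_def nbh_channel_def \<phi>_def \<psi>_def by auto
    show "\<forall>D\<in>nbh_channels N (Bs - {b}) (Ws - {w}). \<phi> (\<psi> D) = D"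
      using assms(6) unfolding nbh_channels_def \<phi>_def \<psi>_def by auto
    show "\<phi> ` nbh_channels N Bs Ws \<subseteq> nbh_channels N (Bs - {b}) (Ws - {w})"
      using flip assms(5,6) unfolding nbh_channels_def nbh_channel_def \<phi>_def by auto
    show "\<psi> ` nbh_channels N (Bs - {b}) (Ws - {w}) \<subseteq> nbh_channels N Bs Ws"
    proof (rule image_subsetI)
      fix D assume "D \<in> nbh_channels N (Bs - {b}) (Ws - {w})"
      then have "D \<subseteq> Bs" "\<forall>x\<in>Ws - {w}. ?even D x"
        unfolding nbh_channels_def nbh_channel_def by auto
      then show "\<psi> D \<in> nbh_channels N Bs Ws"
        using flip[of D] assms(5) unfolding nbh_channels_def nbh_channel_def \<psi>_def by auto
    qed
  qed
  then show ?thesis by (rule bij_betw_same_card)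
qed

subsection \<open>Removing disjoint pairs\<close>

lemma remove_pairs_invariant:
  fixes f :: "'a set \<Rightarrow> 'a set \<Rightarrow> 'b" and b w :: "nat \<Rightarrow> 'a"
  assumes "inj_on b {..<n}" "inj_on w {..<n}" "\<forall>i<n. b i \<in> Bs \<and> w i \<in> Ws"
    and "\<forall>i<n. B i \<subseteq> Bs \<and> B i \<inter> b ` {..<n} \<subseteq> {b i}"
    and step: "\<And>i Bs' Ws'. i < n \<Longrightarrow> Bs' \<subseteq> Bs \<Longrightarrow> Ws' \<subseteq> Ws \<Longrightarrow> b i \<in> Bs' \<Longrightarrow> w i \<in> Ws'
                 \<Longrightarrow> B i \<subseteq> Bs' \<Longrightarrow> f Bs' Ws' = f (Bs' - {b i}) (Ws' - {w i})"
  shows "f Bs Ws = f (Bs - b ` {..<n}) (Ws - w ` {..<n})"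
proof -
  have "m \<le> n \<Longrightarrow> f Bs Ws = f (Bs - b ` {..<m}) (Ws - w ` {..<m})" for m
  proof (induction m)
    case (Suc m)
    have "m < n" using Suc.prems by simp
    then have m: "b m \<in> Bs" "w m \<in> Ws" "B m \<subseteq> Bs" "B m \<inter> b ` {..<n} \<subseteq> {b m}"
      using assms(3,4) by simp_all
    have fresh: "b m \<notin> b ` {..<m}" "w m \<notin> w ` {..<m}"
      using inj_on_image_mem_iff[OF assms(1), of m "{..<m}"]
        inj_on_image_mem_iff[OF assms(2), of m "{..<m}"] \<open>m < n\<close> by auto
    have "B m \<subseteq> Bs - b ` {..<m}"
    proof
      fix u assume u: "u \<in> B m"
      have "u \<notin> b ` {..<m}"
      proof
        assume "u \<in> b ` {..<m}"
        moreover have "b ` {..<m} \<subseteq> b ` {..<n}" using \<open>m < n\<close> by (intro image_mono) auto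
        ultimately have "u = b m" using u m(4) by (meson IntI in_mono singletonD)
        then show False using \<open>u \<in> b ` {..<m}\<close> fresh(1) by simp
      qed
      then show "u \<in> Bs - b ` {..<m}" using u m(3) by blast
    qed
    then have step_m: "f (Bs - b ` {..<m}) (Ws - w ` {..<m})
        = f (Bs - b ` {..<m} - {b m}) (Ws - w ` {..<m} - {w m})"
      using m(1,2) fresh by (intro step[OF \<open>m < n\<close>]) auto
    have "Bs - b ` {..<Suc m} = Bs - b ` {..<m} - {b m}" "Ws - w ` {..<Suc m} = Ws - w ` {..<m} - {w m}"
      by (auto simp: lessThan_Suc)
    then show ?case using Suc.IH[OF less_imp_le[OF \<open>m < n\<close>]] step_m by simp
  qed simp
  from this[of n] show ?thesis by simp
qed

lemma card_matching_maps_remove_pairs_mod2: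
  fixes b w :: "nat \<Rightarrow> 'a"
  assumes "finite Bs" "finite Ws" "inj_on b {..<n}" "inj_on w {..<n}"
    and "\<forall>i<n. b i \<in> Bs \<and> w i \<in> Ws \<and> w i \<in> N (b i)"
    and "\<forall>i<n. B i \<subseteq> Bs \<and> B i \<inter> b ` {..<n} \<subseteq> {b i} \<and> B i \<noteq> {}
                \<and> nbh_channel (N(b i := N (b i) - {w i})) Ws (B i)"
  shows "card (matching_maps Bs Ws N) mod 2
           = card (matching_maps (Bs - b ` {..<n}) (Ws - w ` {..<n}) N) mod 2"
proof (rule remove_pairs_invariant[where f = "\<lambda>Bs Ws. card (matching_maps Bs Ws N) mod 2"])
  fix i Bs' Ws' assume i: "i < n" "Bs' \<subseteq> Bs" "Ws' \<subseteq> Ws" "b i \<in> Bs'" "w i \<in> Ws'" "B i \<subseteq> Bs'"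
  have "finite Bs'" "finite Ws'" using i(2,3) assms(1,2) finite_subset by auto
  moreover have "nbh_channel (N(b i := N (b i) - {w i})) Ws' (B i)"
    using i(1,3) assms(6) nbh_channel_mono by blast
  ultimately show "card (matching_maps Bs' Ws' N) mod 2 = card (matching_maps (Bs' - {b i}) (Ws' - {w i}) N) mod 2"
    using i assms(5,6) by (intro card_matching_maps_remove_edge_mod2[of _ _ _ _ _ "B i"]) auto
qed (use assms in auto)

lemma card_nbh_channels_remove_pairs:
  fixes b w :: "nat \<Rightarrow> 'a"
  assumes "finite Bs" "inj_on b {..<n}" "inj_on w {..<n}"
    and "\<forall>i<n. b i \<in> Bs \<and> w i \<in> Ws \<and> w i \<in> N (b i)"
    and "\<forall>i<n. B i \<subseteq> Bs \<and> B i \<inter> b ` {..<n} = {b i}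
                \<and> nbh_channel (N(b i := N (b i) - {w i})) Ws (B i)"
  shows "card (nbh_channels N Bs Ws) = card (nbh_channels N (Bs - b ` {..<n}) (Ws - w ` {..<n}))"
proof (rule remove_pairs_invariant[where f = "\<lambda>Bs Ws. card (nbh_channels N Bs Ws)"])
  fix i Bs' Ws' assume i: "i < n" "Bs' \<subseteq> Bs" "Ws' \<subseteq> Ws" "b i \<in> Bs'" "w i \<in> Ws'" "B i \<subseteq> Bs'"
  have "finite Bs'" using i(2) assms(1) finite_subset by auto
  moreover have "nbh_channel (N(b i := N (b i) - {w i})) Ws' (B i)"
    using i(1,3) assms(5) nbh_channel_mono by blast
  ultimately show "card (nbh_channels N Bs' Ws') = card (nbh_channels N (Bs' - {b i}) (Ws' - {w i}))"
    using i assms(4,5) by (intro card_nbh_channels_remove_edge[of _ _ _ _ _ "B i"]) auto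
qed (use assms in auto)

subsection \<open>Bipartite graphs\<close>

definition neighbours :: "'a set set \<Rightarrow> 'a \<Rightarrow> 'a set" where
  "neighbours E u = {x. {u, x} \<in> E}"

lemma bipartite_graphD:
  assumes "bipartite_graph V E Bl Wh"
  shows "finite Bl" "finite Wh" "Bl \<inter> Wh = {}" "Bl \<union> Wh = V"
    and "e \<in> E \<Longrightarrow> \<exists>x\<in>Bl. \<exists>y\<in>Wh. e = {x, y}"
  using assms unfolding bipartite_graph_def simple_graph_def by auto

lemma bipartite_graph_edge_white:
  assumes "bipartite_graph V E Bl Wh" "{u, v} \<in> E" "u \<in> Bl"
  shows "v \<in> Wh"
proof -
  obtain x y where xy: "x \<in> Bl" "y \<in> Wh" "{u, v} = {x, y}"
    using bipartite_graphD(5)[OF assms(1,2)] by blast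
  then have "u = x \<and> v = y \<or> u = y \<and> v = x" by (simp add: doubleton_eq_iff)
  then show ?thesis using xy(1,2) bipartite_graphD(3)[OF assms(1)] assms(3) by blast
qed

lemma bipartite_graph_mono_edges:
  assumes "bipartite_graph V E Bl Wh" "E' \<subseteq> E"
  shows "bipartite_graph V E' Bl Wh"
  using assms unfolding bipartite_graph_def simple_graph_def by (meson subsetD)

lemma bipartite_graph_del_vertices:
  assumes "bipartite_graph V E Bl Wh"
  shows "bipartite_graph (V - S) (del_vertices_edges E S) (Bl - S) (Wh - S)"
  unfolding bipartite_graph_def simple_graph_def
proof (intro conjI ballI)
  have "simple_graph V E" using assms unfolding bipartite_graph_def by simp
  then show "finite (V - S)" unfolding simple_graph_def by simp
  show "(Bl - S) \<inter> (Wh - S) = {}" "(Bl - S) \<union> (Wh - S) = V - S"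
    using bipartite_graphD(3,4)[OF assms] by auto
  fix e assume "e \<in> del_vertices_edges E S"
  then have e: "e \<in> E" "e \<inter> S = {}" unfolding del_vertices_edges_def by auto
  then obtain x y where xy: "x \<in> Bl" "y \<in> Wh" "e = {x, y}" using bipartite_graphD(5)[OF assms] by blast
  then have "x \<notin> S" "y \<notin> S" "x \<noteq> y" using e(2) bipartite_graphD(3)[OF assms] by auto
  then show "\<exists>x\<in>Bl - S. \<exists>y\<in>Wh - S. e = {x, y}"
    and "\<exists>x y. x \<in> V - S \<and> y \<in> V - S \<and> x \<noteq> y \<and> e = {x, y}"
    using xy bipartite_graphD(4)[OF assms] by auto
qed

lemma neighbours_del_vertices_edges:
  "u \<notin> S \<Longrightarrow> neighbours (del_vertices_edges E S) u = neighbours E u - S"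
  unfolding neighbours_def del_vertices_edges_def by auto

lemma perfect_matching_of_matching_map:
  assumes bip: "bipartite_graph V E Bl Wh" and f: "f \<in> matching_maps Bl Wh (neighbours E)"
  shows "(\<lambda>u. {u, f u}) ` Bl \<in> perfect_matchings V E"
proof -
  have bij: "bij_betw f Bl Wh" and edge: "\<forall>u\<in>Bl. {u, f u} \<in> E"
    using f unfolding matching_maps_def neighbours_def by auto
  have fW: "f u \<in> Wh" if "u \<in> Bl" for u using bij that by (auto simp: bij_betw_def)
  note colours = bipartite_graphD(3,4)[OF bip]
  define g where "g v = (if v \<in> Bl then v else inv_into Bl f v)" for v
  have g: "g v \<in> Bl" if "v \<in> V" for v
    using that colours bij unfolding g_def by (auto simp: bij_betw_def intro: inv_into_into)
  have partner: "v \<in> {u, f u} \<longleftrightarrow> u = g v" if "u \<in> Bl" "v \<in> V" for u v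
  proof (cases "v \<in> Bl")
    case True
    then show ?thesis using fW[OF that(1)] colours unfolding g_def by auto
  next
    case False
    then have "v \<in> Wh" using that(2) colours by auto
    then show ?thesis using False that(1) bij bij_betw_inv_into_right[OF bij]
      unfolding g_def by (auto simp: bij_betw_def)
  qed
  have "\<exists>!e. e \<in> (\<lambda>u. {u, f u}) ` Bl \<and> v \<in> e" if "v \<in> V" for v
  proof (rule ex1I)
    show "{g v, f (g v)} \<in> (\<lambda>u. {u, f u}) ` Bl \<and> v \<in> {g v, f (g v)}"
      using partner[OF g[OF that] that] g[OF that] by auto
    fix e assume e: "e \<in> (\<lambda>u. {u, f u}) ` Bl \<and> v \<in> e"
    then obtain u where "u \<in> Bl" "e = {u, f u}" by auto
    then show "e = {g v, f (g v)}" using partner[OF _ that] e by simp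
  qed
  then show ?thesis using edge unfolding perfect_matchings_def by auto
qed

lemma matching_map_of_perfect_matching:
  assumes bip: "bipartite_graph V E Bl Wh" and M: "M \<in> perfect_matchings V E"
  obtains f where "f \<in> matching_maps Bl Wh (neighbours E)" "M = (\<lambda>u. {u, f u}) ` Bl"
proof -
  have ME: "M \<subseteq> E" and unique_edge: "\<And>v. v \<in> V \<Longrightarrow> \<exists>!e. e \<in> M \<and> v \<in> e"
    using M unfolding perfect_matchings_def by auto
  note colours = bipartite_graphD(3,4)[OF bip]
  have split: "\<exists>x\<in>Bl. \<exists>y\<in>Wh. e = {x, y}" if "e \<in> M" for e
    using bipartite_graphD(5)[OF bip] ME that by blast
  have partner: "\<exists>!y. {x, y} \<in> M" if x: "x \<in> Bl" for x
  proof -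
    obtain e where e: "e \<in> M" "x \<in> e" using unique_edge[of x] x colours by auto
    with split obtain x' y where "x' \<in> Bl" "y \<in> Wh" "e = {x', y}" by blast
    then have "{x, y} \<in> M" using e x colours by auto
    moreover have "y' = y" if "{x, y'} \<in> M" for y'
    proof -
      have "{x, y'} = {x, y}" using unique_edge[of x] x colours \<open>{x, y} \<in> M\<close> that by blast
      then show ?thesis by (auto simp: doubleton_eq_iff)
    qed
    ultimately show ?thesis by blast
  qed
  define f where "f = (\<lambda>x\<in>Bl. THE y. {x, y} \<in> M)"
  have fM: "{x, f x} \<in> M" if "x \<in> Bl" for x
    using theI'[OF partner[OF that]] that unfolding f_def by simp
  have f_eq: "f x = y" if "x \<in> Bl" "{x, y} \<in> M" for x y
    using the1_equality[OF partner] that unfolding f_def by simp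
  have fW: "f x \<in> Wh" if "x \<in> Bl" for x
    using bipartite_graph_edge_white[OF bip] fM[OF that] ME that by blast
  have "M = (\<lambda>u. {u, f u}) ` Bl"
  proof
    show "M \<subseteq> (\<lambda>u. {u, f u}) ` Bl"
    proof
      fix e assume "e \<in> M"
      with split obtain x y where "x \<in> Bl" "e = {x, y}" by blast
      then show "e \<in> (\<lambda>u. {u, f u}) ` Bl" using f_eq \<open>e \<in> M\<close> by auto
    qed
  qed (use fM in auto)
  moreover have "inj_on f Bl"
  proof (rule inj_onI)
    fix x x' assume x: "x \<in> Bl" "x' \<in> Bl" "f x = f x'"
    then have "f x \<in> V" using fW colours by auto
    then have "{x, f x} = {x', f x'}" using unique_edge fM x by (metis insertCI)
    then show "x = x'" using fW[OF x(2)] x(1) colours by (auto simp: doubleton_eq_iff)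
  qed
  moreover have "Wh \<subseteq> f ` Bl"
  proof
    fix y assume y: "y \<in> Wh"
    then obtain e where e: "e \<in> M" "y \<in> e" using unique_edge[of y] colours by auto
    with split obtain x y' where "x \<in> Bl" "e = {x, y'}" by blast
    then have "x \<in> Bl" "{x, y} \<in> M" using e y colours by (auto simp: insert_commute)
    then show "y \<in> f ` Bl" using f_eq by force
  qed
  ultimately have "f \<in> matching_maps Bl Wh (neighbours E)"
    using fW fM ME unfolding matching_maps_def neighbours_def bij_betw_def f_def
    by (auto simp: PiE_iff)
  then show thesis using \<open>M = (\<lambda>u. {u, f u}) ` Bl\<close> by (rule that)
qed

lemma num_pm_eq_card_matching_maps:
  assumes bip: "bipartite_graph V E Bl Wh"
  shows "num_pm V E = card (matching_maps Bl Wh (neighbours E))"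
proof -
  let ?M = "\<lambda>f. (\<lambda>u. {u, f u}) ` Bl"
  have inj: "inj_on ?M (matching_maps Bl Wh (neighbours E))"
  proof (rule inj_onI)
    fix f f' assume f: "f \<in> matching_maps Bl Wh (neighbours E)" "f' \<in> matching_maps Bl Wh (neighbours E)"
      and eq: "?M f = ?M f'"
    have ext: "f \<in> Bl \<rightarrow>\<^sub>E Wh" "f' \<in> Bl \<rightarrow>\<^sub>E Wh"
      using f unfolding matching_maps_def by blast+
    show "f = f'"
    proof
      fix x show "f x = f' x"
      proof (cases "x \<in> Bl")
        case True
        then have "{x, f x} \<in> ?M f'" unfolding eq[symmetric] by simp
        then obtain u where u: "u \<in> Bl" "{x, f x} = {u, f' u}" by auto
        have "x \<noteq> f' u" using PiE_mem[OF ext(2) u(1)] True bipartite_graphD(3)[OF bip] by auto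
        then show ?thesis using u(2) by (auto simp: doubleton_eq_iff)
      next
        case False
        then show ?thesis using PiE_arb[OF ext(1) False] PiE_arb[OF ext(2) False] by simp
      qed
    qed
  qed
  have "?M ` matching_maps Bl Wh (neighbours E) = perfect_matchings V E"
  proof
    show "?M ` matching_maps Bl Wh (neighbours E) \<subseteq> perfect_matchings V E"
      using perfect_matching_of_matching_map[OF bip] by (rule image_subsetI)
    show "perfect_matchings V E \<subseteq> ?M ` matching_maps Bl Wh (neighbours E)"
    proof
      fix M assume "M \<in> perfect_matchings V E"
      then obtain f where "f \<in> matching_maps Bl Wh (neighbours E)" "M = ?M f"
        by (rule matching_map_of_perfect_matching[OF bip])
      then show "M \<in> ?M ` matching_maps Bl Wh (neighbours E)" by (intro image_eqI[where f = ?M])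
    qed
  qed
  then show ?thesis unfolding num_pm_def using card_image[OF inj] by simp
qed

lemma black_channels_eq_nbh_channels:
  assumes bip: "bipartite_graph V E Bl Wh"
  shows "black_channels V E Bl = nbh_channels (neighbours E) Bl Wh"
proof -
  have "channel V E C \<longleftrightarrow> nbh_channel (neighbours E) Wh C" if C: "C \<subseteq> Bl" for C
  proof -
    have adjacent: "{u \<in> C. {u, v} \<in> E} = {u \<in> C. v \<in> neighbours E u}" for v
      unfolding neighbours_def by blast
    have "card {u \<in> C. v \<in> neighbours E u} = 0" if "v \<in> Bl" for v
    proof -
      have "v \<notin> Wh" using that bipartite_graphD(3)[OF bip] by blast
      then have "{u \<in> C. v \<in> neighbours E u} = {}"
        using bipartite_graph_edge_white[OF bip, of _ v] C unfolding neighbours_def by blast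
      then show ?thesis by (simp only: card.empty)
    qed
    then show ?thesis
      using C bipartite_graphD(4)[OF bip] unfolding channel_def nbh_channel_def adjacent by auto
  qed
  then show ?thesis unfolding black_channels_def nbh_channels_def by auto
qed

lemma neighbours_del_vertices_edges_Int:
  "u \<notin> S \<Longrightarrow> neighbours (del_vertices_edges E S) u \<inter> (Wh - S) = neighbours E u \<inter> (Wh - S)"
  by (auto simp: neighbours_del_vertices_edges)

lemma num_pm_del_vertices:
  assumes "bipartite_graph V E Bl Wh"
  shows "num_pm (V - S) (del_vertices_edges E S) = card (matching_maps (Bl - S) (Wh - S) (neighbours E))"
proof -
  have "matching_maps (Bl - S) (Wh - S) (neighbours (del_vertices_edges E S))
      = matching_maps (Bl - S) (Wh - S) (neighbours E)"
    by (rule matching_maps_cong) (simp add: neighbours_del_vertices_edges_Int)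
  then show ?thesis
    using num_pm_eq_card_matching_maps[OF bipartite_graph_del_vertices[OF assms]] by simp
qed

lemma black_channels_del_vertices:
  assumes "bipartite_graph V E Bl Wh"
  shows "black_channels (V - S) (del_vertices_edges E S) (Bl - S) = nbh_channels (neighbours E) (Bl - S) (Wh - S)"
proof -
  have "nbh_channels (neighbours (del_vertices_edges E S)) (Bl - S) (Wh - S)
      = nbh_channels (neighbours E) (Bl - S) (Wh - S)"
    by (rule nbh_channels_cong) (simp add: neighbours_del_vertices_edges_Int)
  then show ?thesis
    using black_channels_eq_nbh_channels[OF bipartite_graph_del_vertices[OF assms]] by simp
qed

lemma neighbours_remove_pairs:
  assumes bip: "bipartite_graph V E Bl Wh" and "\<forall>j<n. b j \<in> Bl \<and> w j \<in> Wh" and "u \<in> Bl"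
  shows "neighbours (E - {{b j, w j} | j. j < n}) u \<inter> Wh
           = (neighbours E u - w ` {j. j < n \<and> b j = u}) \<inter> Wh"
proof -
  have "{u, x} \<in> {{b j, w j} | j. j < n} \<longleftrightarrow> x \<in> w ` {j. j < n \<and> b j = u}" if "x \<in> Wh" for x
  proof
    assume "{u, x} \<in> {{b j, w j} | j. j < n}"
    then obtain j where j: "j < n" "{u, x} = {b j, w j}" by blast
    have "u \<noteq> w j" using assms(2,3) j(1) bipartite_graphD(3)[OF bip] by blast
    then have "u = b j" "x = w j" using j(2) by (auto simp: doubleton_eq_iff)
    then show "x \<in> w ` {j. j < n \<and> b j = u}" using j(1) by blast
  qed blast
  then show ?thesis unfolding neighbours_def by blast
qed

lemma nbh_channel_of_black_channel_remove_pairs: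
  assumes bip: "bipartite_graph V E Bl Wh" and "\<forall>j<n. b j \<in> Bl \<and> w j \<in> Wh" "inj_on b {..<n}"
    and "i < n" "C \<in> black_channels V (E - {{b j, w j} | j. j < n}) Bl" "C \<inter> b ` {..<n} \<subseteq> {b i}"
  shows "C \<subseteq> Bl" "nbh_channel ((neighbours E)(b i := neighbours E (b i) - {w i})) Wh C"
proof -
  let ?P = "{{b j, w j} | j. j < n}"
  have "C \<in> nbh_channels (neighbours (E - ?P)) Bl Wh"
    using black_channels_eq_nbh_channels[OF bipartite_graph_mono_edges[OF bip]] assms(5) by blast
  then have C: "C \<subseteq> Bl" and channel: "nbh_channel (neighbours (E - ?P)) Wh C"
    unfolding nbh_channels_def by auto
  then show "C \<subseteq> Bl" by simp
  have "nbh_channel (neighbours (E - ?P)) Wh C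
      = nbh_channel ((neighbours E)(b i := neighbours E (b i) - {w i})) Wh C"
  proof (rule nbh_channel_cong)
    fix u assume u: "u \<in> C"
    have pairs_at_u: "{j. j < n \<and> b j = u} = (if u = b i then {i} else {})"
      using u assms(4,6) inj_on_eq_iff[OF assms(3)] by auto
    have "u \<in> Bl" using u C by blast
    then show "neighbours (E - ?P) u \<inter> Wh = ((neighbours E)(b i := neighbours E (b i) - {w i})) u \<inter> Wh"
      unfolding neighbours_remove_pairs[OF bip assms(2) \<open>u \<in> Bl\<close>] pairs_at_u by auto
  qed
  with channel show "nbh_channel ((neighbours E)(b i := neighbours E (b i) - {w i})) Wh C" by simp
qed

theorem theorem5p7:
  fixes V :: "'a set" and E :: "'a set set" and Bl Wh :: "'a set"
    and n :: nat and b w :: "nat \<Rightarrow> 'a" and B :: "nat \<Rightarrow> 'a set"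
  assumes bip: "bipartite_graph V E Bl Wh"
    and edges: "\<forall>i<n. {b i, w i} \<in> E"
    and black: "\<forall>i<n. b i \<in> Bl" and white: "\<forall>i<n. w i \<in> Wh"
    and disj_b: "inj_on b {..<n}" and disj_w: "inj_on w {..<n}"
    and chan: "\<forall>i<n. B i \<in> black_channels V (E - {{b j, w j} | j. j < n}) Bl
                      \<and> B i \<noteq> {} \<and> B i \<inter> b ` {..<n} \<subseteq> {b i}"
  shows "num_pm V E mod 2
           = num_pm (V - (b ` {..<n} \<union> w ` {..<n})) (del_vertices_edges E (b ` {..<n} \<union> w ` {..<n})) mod 2
         \<and> ((\<forall>i<n. B i \<inter> b ` {..<n} = {b i}) \<longrightarrow>
             card (black_channels V E Bl)
             = card (black_channels (V - (b ` {..<n} \<union> w ` {..<n}))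
                       (del_vertices_edges E (b ` {..<n} \<union> w ` {..<n}))
                       (Bl - b ` {..<n})))"
proof -
  let ?bS = "b ` {..<n}" and ?wS = "w ` {..<n}" and ?N = "neighbours E"
  let ?S = "?bS \<union> ?wS"
  have colours: "\<forall>i<n. b i \<in> Bl \<and> w i \<in> Wh" using black white by blast
  have pairs: "\<forall>i<n. b i \<in> Bl \<and> w i \<in> Wh \<and> w i \<in> ?N (b i)"
    using colours edges unfolding neighbours_def by blast
  have B: "B i \<subseteq> Bl" "nbh_channel (?N(b i := ?N (b i) - {w i})) Wh (B i)" if "i < n" for i
    using nbh_channel_of_black_channel_remove_pairs[OF bip colours disj_b that] chan that by auto
  have sides: "Bl - ?S = Bl - ?bS" "Wh - ?S = Wh - ?wS"
    using colours bipartite_graphD(3)[OF bip] by auto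
  have "num_pm V E mod 2 = num_pm (V - ?S) (del_vertices_edges E ?S) mod 2"
    using card_matching_maps_remove_pairs_mod2[of Bl Wh b n w ?N B] B pairs chan disj_b disj_w
      bipartite_graphD(1,2)[OF bip]
    unfolding num_pm_eq_card_matching_maps[OF bip] num_pm_del_vertices[OF bip] sides by auto
  moreover have "card (black_channels V E Bl)
      = card (black_channels (V - ?S) (del_vertices_edges E ?S) (Bl - ?bS))"
    if "\<forall>i<n. B i \<inter> ?bS = {b i}"
    using card_nbh_channels_remove_pairs[of Bl b n w Wh ?N B] B pairs that disj_b disj_w
      bipartite_graphD(1)[OF bip]
    unfolding black_channels_eq_nbh_channels[OF bip] black_channels_del_vertices[OF bip]
      sides[symmetric] by auto
  ultimately show ?thesis by blast
qed

end
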